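(* Let $C\in\mathbb{R}^{p\times p}$ be positive definite, $w\in\mathbb{R}^p$, $\mu>0$ and $\tau>0$. Let $\mathcal{D}=\{z\in\mathbb{C}^p : |\operatorname{Re} z_j|<\mu,\ j=1,\dots,p\}$ and define on $\mathcal{D}$ the holomorphic function $$H_\tau(z)=(z-w)^TC^{-1}(z-w)-\frac1\tau\sum_{j=1}^p\ln(\mu^2-z_j^2).$$ Then $H_\tau$ has a unique saddle point (critical point) $\hat u_\tau$ in $\mathcal{D}$. This saddle point is real, $\hat u_\tau\in\mathcal{D}\cap\mathbb{R}^p$, and it is a solution $u\in\mathbb{R}^p$ of the system of cubic equations $$(\mu^2-u_j^2)\,[C^{-1}(w-u)]_j-\frac{u_j}{\tau}=0,\qquad j=1,\dots,p.$$
   Context: Here $\ln$ denotes the principal branch of the logarithm; on $\mathcal{D}$ one has $\operatorname{Re}(\mu^2-z_j^2)$ avoiding the branch issues because $|\operatorname{Re} z_j|<\mu$ (equivalently, $\ln(\mu^2-z_j^2)=\ln(\mu-z_j)+\ln(\mu+z_j)$ with both arguments having positive real part). A saddle point means a point $z\in\mathcal{D}$ with $\nabla H_\tau(z)=0$. *)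

theory Defs
  imports "HOL-Analysis.Analysis"
begin

definition pos_def_mat :: "real^'n^'n \<Rightarrow> bool" where
  "pos_def_mat C \<longleftrightarrow> transpose C = C \<and> (\<forall>x. x \<noteq> 0 \<longrightarrow> x \<bullet> (C *v x) > 0)"

definition strip_dom :: "real \<Rightarrow> (complex^'n) set" where
  "strip_dom \<mu> = {z. \<forall>j. \<bar>Re (z $ j)\<bar> < \<mu>}"

definition H_tau :: "real^'n^'n \<Rightarrow> real^'n \<Rightarrow> real \<Rightarrow> real \<Rightarrow> complex^'n \<Rightarrow> complex" where
  "H_tau C w \<mu> \<tau> z =
     (\<Sum>i\<in>UNIV. \<Sum>k\<in>UNIV. (z $ i - complex_of_real (w $ i)) * complex_of_real (matrix_inv C $ i $ k)
                           * (z $ k - complex_of_real (w $ k)))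
     - complex_of_real (1 / \<tau>) * (\<Sum>j\<in>UNIV. Ln (complex_of_real (\<mu>\<^sup>2) - (z $ j)\<^sup>2))"

definition saddle_point :: "(complex^'n \<Rightarrow> complex) \<Rightarrow> complex^'n \<Rightarrow> bool" where
  "saddle_point H z \<longleftrightarrow>
     (\<forall>j. ((\<lambda>t. H (z + t *s axis j 1)) has_field_derivative 0) (at 0))"

end

theory Submission
  imports Defs
begin

text \<open>
  Writing \<open>A = C\<^sup>-\<^sup>1\<close>, the gradient of \<open>H\<^sub>\<tau>\<close> vanishes at \<open>z\<close> iff
  \<open>(A (w - z))\<^sub>j = z\<^sub>j / (\<tau> (\<mu>\<^sup>2 - z\<^sub>j\<^sup>2))\<close> for all \<open>j\<close>.
  Taking imaginary parts, \<open>y = Im z\<close> satisfies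
  \<open>y\<^sub>j (A y)\<^sub>j = - y\<^sub>j Im (z\<^sub>j / (\<mu>\<^sup>2 - z\<^sub>j\<^sup>2)) / \<tau> \<le> 0\<close>, because
  \<open>Im (z / (\<mu>\<^sup>2 - z\<^sup>2))\<close> has the sign of \<open>Im z\<close>; as \<open>A\<close> is positive definite, \<open>y = 0\<close>.
  So every saddle point is real, and for two real ones \<open>u, v\<close> the same computation with the
  increasing map \<open>x \<mapsto> x / (\<mu>\<^sup>2 - x\<^sup>2)\<close> on \<open>(-\<mu>, \<mu>)\<close> gives \<open>(u - v) \<bullet> A (u - v) \<le> 0\<close>,
  hence \<open>u = v\<close>. For existence, \<open>H\<^sub>\<tau>\<close> restricted to the real box \<open>(-\<mu>, \<mu>)\<^sup>p\<close> is
  continuous and blows up at the boundary because of the logarithmic barrier, so it attains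
  a minimum, which is a critical point.
\<close>

lemma pos_def_mat_invertible:
  fixes C :: "real^'n^'n"
  assumes "pos_def_mat C"
  shows "invertible C"
proof -
  have "\<forall>x. C *v x = 0 \<longrightarrow> x = 0"
    using assms unfolding pos_def_mat_def by (metis inner_zero_right less_irrefl)
  then show ?thesis
    using matrix_left_invertible_ker invertible_left_inverse by blast
qed

lemma matrix_mul_matrix_inv:
  fixes C :: "'a::semiring_1^'n^'n"
  assumes "invertible C"
  shows "C ** matrix_inv C = mat 1"
proof -
  have "\<exists>A'. C ** A' = mat 1 \<and> A' ** C = mat 1"
    using assms unfolding invertible_def by blast
  from someI_ex[OF this] show ?thesis
    unfolding matrix_inv_def by blast
qed

lemma pos_def_mat_matrix_inv:
  fixes C :: "real^'n^'n"
  assumes "pos_def_mat C"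
  shows "pos_def_mat (matrix_inv C)"
  unfolding pos_def_mat_def
proof safe
  let ?A = "matrix_inv C"
  have inv: "invertible C" using assms by (rule pos_def_mat_invertible)
  have sym: "transpose C = C" using assms unfolding pos_def_mat_def by blast
  have "transpose ?A ** C = mat 1"
    by (metis matrix_mul_matrix_inv[OF inv] matrix_transpose_mul sym transpose_mat)
  then show "transpose ?A = ?A"
    by (metis matrix_mul_matrix_inv[OF inv] matrix_mul_assoc matrix_mul_lid matrix_mul_rid)
  fix y :: "real^'n"
  assume "y \<noteq> 0"
  define x where "x = ?A *v y"
  have Cx: "C *v x = y"
    unfolding x_def by (simp add: matrix_vector_mul_assoc matrix_mul_matrix_inv[OF inv])
  moreover have "x \<noteq> 0" using Cx \<open>y \<noteq> 0\<close> by auto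
  ultimately have "x \<bullet> (C *v x) > 0"
    using assms unfolding pos_def_mat_def by blast
  then show "y \<bullet> (?A *v y) > 0"
    using Cx by (simp add: x_def inner_commute)
qed

lemma pos_def_mat_nonneg:
  assumes "pos_def_mat A"
  shows "x \<bullet> (A *v x) \<ge> 0"
  using assms unfolding pos_def_mat_def by (cases "x = 0") (auto intro: less_imp_le)

lemma pos_def_mat_eq_0:
  assumes "pos_def_mat A" and "\<And>j. x $ j * (A *v x) $ j \<le> 0"
  shows "x = 0"
proof (rule ccontr)
  assume "x \<noteq> 0"
  then have "0 < x \<bullet> (A *v x)" using assms(1) unfolding pos_def_mat_def by blast
  also have "x \<bullet> (A *v x) \<le> 0" unfolding inner_vec_def by (intro sum_nonpos) (use assms(2) in auto)
  finally show False by simp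
qed

lemma quadratic_form_axis_deriv:
  fixes A :: "'a::real_normed_field^'n^'n"
  assumes "transpose A = A"
  shows "((\<lambda>t. \<Sum>i\<in>UNIV. \<Sum>k\<in>UNIV. (x + t *s axis j 1) $ i * A $ i $ k * (x + t *s axis j 1) $ k)
           has_field_derivative 2 * (A *v x) $ j) (at 0)"
proof -
  define e :: "'n \<Rightarrow> 'a" where "e i = of_bool (i = j)" for i
  have comp: "(x + t *s axis j 1) $ i = x $ i + t * e i" for t i
    by (simp add: e_def axis_def)
  have deriv: "((\<lambda>t. \<Sum>i\<in>UNIV. \<Sum>k\<in>UNIV. (x $ i + t * e i) * A $ i $ k * (x $ k + t * e k))
      has_field_derivative (\<Sum>i\<in>UNIV. \<Sum>k\<in>UNIV. e i * A $ i $ k * x $ k + x $ i * A $ i $ k * e k)) (at 0)"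
    by (intro DERIV_sum) (auto intro!: derivative_eq_intros simp: algebra_simps)
  have "(\<Sum>i\<in>UNIV. \<Sum>k\<in>UNIV. e i * A $ i $ k * x $ k) = (\<Sum>i\<in>UNIV. e i * (A *v x) $ i)"
    unfolding matrix_vector_mult_def by (simp add: sum_distrib_left mult.assoc)
  also have "\<dots> = (A *v x) $ j"
    by (simp add: e_def)
  finally have left: "(\<Sum>i\<in>UNIV. \<Sum>k\<in>UNIV. e i * A $ i $ k * x $ k) = (A *v x) $ j" .
  have "(\<Sum>i\<in>UNIV. \<Sum>k\<in>UNIV. x $ i * A $ i $ k * e k) = (x v* A) $ j"
    by (simp add: e_def vector_matrix_mult_def)
  also have "x v* A = A *v x"
    using vector_transpose_matrix[of x A] by (simp only: assms)
  finally have right: "(\<Sum>i\<in>UNIV. \<Sum>k\<in>UNIV. x $ i * A $ i $ k * e k) = (A *v x) $ j" .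
  show ?thesis
    using deriv unfolding comp sum.distrib left right mult_2 .
qed

definition of_real_vec :: "real^'n \<Rightarrow> 'a::real_algebra_1^'n" where
  "of_real_vec x = (\<chi> i. of_real (x $ i))"

lemma of_real_vec_nth [simp]: "of_real_vec x $ i = of_real (x $ i)"
  by (simp add: of_real_vec_def)

lemma of_real_vec_real [simp]: "(of_real_vec x :: real^'n) = x"
  by (simp add: vec_eq_iff)

lemma of_real_vec_diff: "of_real_vec (x - y) = of_real_vec x - of_real_vec y"
  by (simp add: vec_eq_iff)

lemma map_matrix_id [simp]: "map_matrix id A = A"
  by (simp add: vec_eq_iff)

lemma map_matrix_of_real_mult_vec:
  "map_matrix of_real A *v of_real_vec x = of_real_vec (A *v x)"
  by (simp add: matrix_vector_mult_def vec_eq_iff of_real_sum)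

lemma Im_map_matrix_of_real_mult_vec:
  "Im ((map_matrix of_real A *v z) $ j) = (A *v (\<chi> i. Im (z $ i))) $ j"
  by (simp add: matrix_vector_mult_def Im_sum)

lemma transpose_map_matrix: "transpose (map_matrix f A) = map_matrix f (transpose A)"
  by (simp add: vec_eq_iff transpose_def)

lemma abs_less_imp_power2_less:
  fixes x :: real
  assumes "\<bar>x\<bar> < \<mu>"
  shows "x\<^sup>2 < \<mu>\<^sup>2"
  using assms abs_le_square_iff[of \<mu> x] by auto

lemma strip_not_nonpos_Reals:
  assumes "\<bar>Re z\<bar> < \<mu>"
  shows "of_real (\<mu>\<^sup>2) - z\<^sup>2 \<notin> \<real>\<^sub>\<le>\<^sub>0"
proof
  assume "of_real (\<mu>\<^sup>2) - z\<^sup>2 \<in> \<real>\<^sub>\<le>\<^sub>0"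
  then have "\<mu>\<^sup>2 - (Re z)\<^sup>2 + (Im z)\<^sup>2 \<le> 0"
    by (auto simp: complex_nonpos_Reals_iff power2_eq_square)
  moreover have "(Re z)\<^sup>2 < \<mu>\<^sup>2"
    using assms by (rule abs_less_imp_power2_less)
  ultimately show False
    using zero_le_power2[of "Im z"] by linarith
qed

lemma Ln_barrier_axis_deriv:
  fixes z :: "complex^'n"
  assumes "z \<in> strip_dom \<mu>"
  shows "((\<lambda>t. \<Sum>i\<in>UNIV. Ln (of_real (\<mu>\<^sup>2) - ((z + t *s axis j 1) $ i)\<^sup>2))
           has_field_derivative - 2 * z $ j / (of_real (\<mu>\<^sup>2) - (z $ j)\<^sup>2)) (at 0)"
proof -
  define e :: "'n \<Rightarrow> complex" where "e i = of_bool (i = j)" for i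
  have comp: "(z + t *s axis j 1) $ i = z $ i + t * e i" for t i
    by (simp add: e_def axis_def)
  have "of_real (\<mu>\<^sup>2) - (z $ i)\<^sup>2 \<notin> \<real>\<^sub>\<le>\<^sub>0" for i
    using assms strip_not_nonpos_Reals unfolding strip_dom_def by blast
  then have "((\<lambda>t. \<Sum>i\<in>UNIV. Ln (of_real (\<mu>\<^sup>2) - (z $ i + t * e i)\<^sup>2))
      has_field_derivative (\<Sum>i\<in>UNIV. e i * (- 2 * z $ i / (of_real (\<mu>\<^sup>2) - (z $ i)\<^sup>2)))) (at 0)"
    by (intro DERIV_sum) (auto intro!: derivative_eq_intros simp: field_simps)
  moreover have "(\<Sum>i\<in>UNIV. e i * (- 2 * z $ i / (of_real (\<mu>\<^sup>2) - (z $ i)\<^sup>2)))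
      = - 2 * z $ j / (of_real (\<mu>\<^sup>2) - (z $ j)\<^sup>2)"
    unfolding e_def sum_of_bool_mult_eq[OF finite_class.finite_UNIV] by simp
  ultimately show ?thesis
    unfolding comp by simp
qed

lemma H_tau_axis_deriv:
  fixes C :: "real^'n^'n"
  assumes "transpose (matrix_inv C) = matrix_inv C" and "z \<in> strip_dom \<mu>"
  shows "((\<lambda>t. H_tau C w \<mu> \<tau> (z + t *s axis j 1)) has_field_derivative
     - 2 * ((map_matrix of_real (matrix_inv C) *v (of_real_vec w - z)) $ j
            - z $ j / (of_real \<tau> * (of_real (\<mu>\<^sup>2) - (z $ j)\<^sup>2)))) (at 0)"
proof -
  let ?A = "map_matrix complex_of_real (matrix_inv C)"
  let ?x = "z - of_real_vec w"
  let ?D = "of_real (\<mu>\<^sup>2) - (z $ j)\<^sup>2"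
  have comp: "(z + t *s axis j 1) $ i - of_real (w $ i) = (?x + t *s axis j 1) $ i" for t i
    by simp
  have H: "(\<lambda>t. H_tau C w \<mu> \<tau> (z + t *s axis j 1)) = (\<lambda>t.
      (\<Sum>i\<in>UNIV. \<Sum>k\<in>UNIV. (?x + t *s axis j 1) $ i * ?A $ i $ k * (?x + t *s axis j 1) $ k)
      - of_real (1 / \<tau>) * (\<Sum>i\<in>UNIV. Ln (of_real (\<mu>\<^sup>2) - ((z + t *s axis j 1) $ i)\<^sup>2)))"
    unfolding H_tau_def comp nth_map_matrix ..
  have "((\<lambda>t. (\<Sum>i\<in>UNIV. \<Sum>k\<in>UNIV. (?x + t *s axis j 1) $ i * ?A $ i $ k * (?x + t *s axis j 1) $ k)
      - of_real (1 / \<tau>) * (\<Sum>i\<in>UNIV. Ln (of_real (\<mu>\<^sup>2) - ((z + t *s axis j 1) $ i)\<^sup>2)))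
      has_field_derivative 2 * (?A *v ?x) $ j - of_real (1 / \<tau>) * (- 2 * z $ j / ?D)) (at 0)"
    using assms by (intro DERIV_diff DERIV_cmult quadratic_form_axis_deriv Ln_barrier_axis_deriv)
      (simp_all add: transpose_map_matrix)
  moreover have "?A *v ?x = - (?A *v (of_real_vec w - z))"
    by (simp add: matrix_vector_mult_diff_distrib)
  moreover have "of_real (1 / \<tau>) * (- 2 * z $ j / ?D) = - 2 * (z $ j / (of_real \<tau> * ?D))"
    by (simp add: of_real_divide)
  ultimately show ?thesis
    unfolding H by (simp add: right_diff_distrib)
qed

text \<open>For \<open>A = matrix_inv C\<close> this is the vanishing of the gradient of \<open>H_tau\<close>; it is stated
  over any real field so that complex and real points are treated alike.\<close>
definition critical_eq :: "real^'n^'n \<Rightarrow> real^'n \<Rightarrow> real \<Rightarrow> real \<Rightarrow> 'a::real_field^'n \<Rightarrow> bool" where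
  "critical_eq A w \<mu> \<tau> z \<longleftrightarrow>
     (\<forall>j. (map_matrix of_real A *v (of_real_vec w - z)) $ j = z $ j / (of_real \<tau> * (of_real (\<mu>\<^sup>2) - (z $ j)\<^sup>2)))"

lemma saddle_point_H_tau_iff:
  fixes C :: "real^'n^'n"
  assumes "pos_def_mat C" and "z \<in> strip_dom \<mu>"
  shows "saddle_point (H_tau C w \<mu> \<tau>) z \<longleftrightarrow> critical_eq (matrix_inv C) w \<mu> \<tau> z"
proof -
  have "transpose (matrix_inv C) = matrix_inv C"
    using pos_def_mat_matrix_inv[OF assms(1)] unfolding pos_def_mat_def by blast
  note deriv = H_tau_axis_deriv[OF this assms(2)]
  have "saddle_point (H_tau C w \<mu> \<tau>) z \<longleftrightarrow> (\<forall>j. - 2 *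
      ((map_matrix of_real (matrix_inv C) *v (of_real_vec w - z)) $ j
            - z $ j / (of_real \<tau> * (of_real (\<mu>\<^sup>2) - (z $ j)\<^sup>2))) = 0)"
    unfolding saddle_point_def using deriv DERIV_unique by metis
  moreover have "(- 2 :: complex) \<noteq> 0"
    by simp
  ultimately show ?thesis
    unfolding critical_eq_def by (simp only: mult_eq_0_iff right_minus_eq simp_thms)
qed

lemma critical_eq_real_iff:
  "critical_eq A w \<mu> \<tau> u \<longleftrightarrow> (\<forall>j. (A *v (w - u)) $ j = u $ j / (\<tau> * (\<mu>\<^sup>2 - (u $ j)\<^sup>2)))"
  by (simp add: critical_eq_def)

lemma critical_eq_of_real_vec_iff:
  "critical_eq A w \<mu> \<tau> (of_real_vec u :: complex^'n) \<longleftrightarrow> critical_eq A w \<mu> \<tau> u"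
proof -
  have lhs: "map_matrix of_real A *v (of_real_vec w - of_real_vec u) = (of_real_vec (A *v (w - u)) :: complex^'n)"
    by (simp add: map_matrix_of_real_mult_vec flip: of_real_vec_diff)
  have rhs: "of_real (u $ j) / (of_real \<tau> * (of_real (\<mu>\<^sup>2) - (of_real (u $ j))\<^sup>2))
      = (of_real (u $ j / (\<tau> * (\<mu>\<^sup>2 - (u $ j)\<^sup>2))) :: complex)" for j
    by simp
  show ?thesis
    unfolding critical_eq_real_iff unfolding critical_eq_def lhs rhs of_real_vec_nth of_real_eq_iff ..
qed

lemma Im_mult_Im_divide_nonneg: "Im z * Im (z / (of_real (\<mu>\<^sup>2) - z\<^sup>2)) \<ge> 0"
proof -
  define D where "D = of_real (\<mu>\<^sup>2) - z\<^sup>2"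
  have "Im z * Re D - Re z * Im D = Im z * (\<mu>\<^sup>2 + (Re z)\<^sup>2 + (Im z)\<^sup>2)"
    unfolding D_def by (simp add: algebra_simps power2_eq_square)
  then have "Im z * Im (z / D) = (Im z)\<^sup>2 * (\<mu>\<^sup>2 + (Re z)\<^sup>2 + (Im z)\<^sup>2) / ((Re D)\<^sup>2 + (Im D)\<^sup>2)"
    by (simp add: Im_divide power2_eq_square)
  also have "\<dots> \<ge> 0"
    by (intro divide_nonneg_nonneg mult_nonneg_nonneg) auto
  finally show ?thesis unfolding D_def .
qed

lemma critical_eq_Im_eq_0:
  fixes z :: "complex^'n"
  assumes "pos_def_mat A" and "\<tau> > 0" and "critical_eq A w \<mu> \<tau> z"
  shows "Im (z $ j) = 0"
proof -
  define y where "y = (\<chi> i. Im (z $ i))"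
  have "y $ i * (A *v y) $ i \<le> 0" for i
  proof -
    let ?D = "of_real (\<mu>\<^sup>2) - (z $ i)\<^sup>2"
    have "(A *v y) $ i = - Im ((map_matrix of_real A *v (of_real_vec w - z)) $ i)"
      by (simp add: Im_map_matrix_of_real_mult_vec y_def matrix_vector_mult_def sum_negf)
    also have "\<dots> = - Im (z $ i / (of_real \<tau> * ?D))"
      using assms(3) unfolding critical_eq_def by simp
    also have "\<dots> = - (Im (z $ i / ?D) / \<tau>)"
      by (simp only: divide_divide_eq_left'[symmetric] Im_divide_of_real)
    finally have "y $ i * (A *v y) $ i = - (Im (z $ i) * Im (z $ i / ?D) / \<tau>)"
      by (simp add: y_def)
    also have "\<dots> \<le> 0"
      using Im_mult_Im_divide_nonneg[of "z $ i" \<mu>] assms(2) by simp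
    finally show ?thesis .
  qed
  then have "y = 0"
    by (rule pos_def_mat_eq_0[OF assms(1)])
  then show ?thesis
    by (simp add: y_def vec_eq_iff)
qed

lemma mono_on_divide_square_diff: "mono_on {-\<mu><..<\<mu>} (\<lambda>x::real. x / (\<mu>\<^sup>2 - x\<^sup>2))"
proof (rule mono_onI)
  fix a b :: real
  assume a: "a \<in> {-\<mu><..<\<mu>}" and b: "b \<in> {-\<mu><..<\<mu>}" and "a \<le> b"
  then have "\<bar>a\<bar> < \<mu>" "\<bar>b\<bar> < \<mu>"
    by auto
  then have "\<mu>\<^sup>2 - a\<^sup>2 > 0" "\<mu>\<^sup>2 - b\<^sup>2 > 0" "\<mu>\<^sup>2 + a * b > 0"
    using abs_less_imp_power2_less mult_strict_mono[of "\<bar>a\<bar>" \<mu> "\<bar>b\<bar>" \<mu>]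
    by (auto simp: power2_eq_square abs_mult[symmetric])
  then have "b / (\<mu>\<^sup>2 - b\<^sup>2) - a / (\<mu>\<^sup>2 - a\<^sup>2)
      = (b - a) * (\<mu>\<^sup>2 + a * b) / ((\<mu>\<^sup>2 - a\<^sup>2) * (\<mu>\<^sup>2 - b\<^sup>2))"
    by (simp add: field_simps) (simp add: algebra_simps power2_eq_square)
  also have "\<dots> \<ge> 0"
    using \<open>a \<le> b\<close> \<open>\<mu>\<^sup>2 - a\<^sup>2 > 0\<close> \<open>\<mu>\<^sup>2 - b\<^sup>2 > 0\<close> \<open>\<mu>\<^sup>2 + a * b > 0\<close>
    by (intro divide_nonneg_pos mult_nonneg_nonneg) auto
  finally show "a / (\<mu>\<^sup>2 - a\<^sup>2) \<le> b / (\<mu>\<^sup>2 - b\<^sup>2)"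
    by simp
qed

lemma critical_eq_real_unique:
  fixes u v :: "real^'n"
  assumes "pos_def_mat A" and "\<tau> > 0"
    and "\<forall>j. \<bar>u $ j\<bar> < \<mu>" and "critical_eq A w \<mu> \<tau> u"
    and "\<forall>j. \<bar>v $ j\<bar> < \<mu>" and "critical_eq A w \<mu> \<tau> v"
  shows "u = v"
proof -
  define h where "h x = x / (\<mu>\<^sup>2 - x\<^sup>2)" for x :: real
  have h: "(A *v (w - x)) $ j = h (x $ j) / \<tau>" if "critical_eq A w \<mu> \<tau> x" for x j
    using that unfolding critical_eq_real_iff h_def by simp
  have "(u - v) $ j * (A *v (u - v)) $ j \<le> 0" for j
  proof -
    have "A *v (u - v) = A *v (w - v) - A *v (w - u)"
      by (simp add: matrix_vector_mult_diff_distrib)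
    then have Ad: "(A *v (u - v)) $ j = h (v $ j) / \<tau> - h (u $ j) / \<tau>"
      using h[OF assms(4)] h[OF assms(6)] by simp
    have "(u - v) $ j * (A *v (u - v)) $ j = - ((u $ j - v $ j) * (h (u $ j) - h (v $ j))) / \<tau>"
      unfolding Ad by (simp add: algebra_simps add_divide_distrib diff_divide_distrib)
    moreover have "(u $ j - v $ j) * (h (u $ j) - h (v $ j)) \<ge> 0"
    proof -
      have "h a \<le> h b" if "a \<le> b" "\<bar>a\<bar> < \<mu>" "\<bar>b\<bar> < \<mu>" for a b
        using mono_onD[OF mono_on_divide_square_diff] that unfolding h_def by (auto simp: abs_less_iff)
      then show ?thesis
        using assms(3,5) by (cases "u $ j \<le> v $ j") (auto intro: mult_nonpos_nonpos)
    qed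
    ultimately show ?thesis
      using assms(2) by (simp add: divide_nonpos_pos)
  qed
  then have "u - v = 0"
    by (rule pos_def_mat_eq_0[OF assms(1)])
  then show ?thesis
    by simp
qed

definition barrier_objective :: "real^'n^'n \<Rightarrow> real^'n \<Rightarrow> real \<Rightarrow> real \<Rightarrow> real^'n \<Rightarrow> real" where
  "barrier_objective A w \<mu> \<tau> u =
     (\<Sum>i\<in>UNIV. \<Sum>k\<in>UNIV. (u - w) $ i * A $ i $ k * (u - w) $ k)
     - (1 / \<tau>) * (\<Sum>j\<in>UNIV. ln (\<mu>\<^sup>2 - (u $ j)\<^sup>2))"

lemma ln_barrier_axis_deriv:
  fixes u :: "real^'n"
  assumes "\<forall>i. \<bar>u $ i\<bar> < \<mu>"
  shows "((\<lambda>t. \<Sum>i\<in>UNIV. ln (\<mu>\<^sup>2 - ((u + t *s axis j 1) $ i)\<^sup>2))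
           has_real_derivative - 2 * u $ j / (\<mu>\<^sup>2 - (u $ j)\<^sup>2)) (at 0)"
proof -
  define e :: "'n \<Rightarrow> real" where "e i = of_bool (i = j)" for i
  have comp: "(u + t *s axis j 1) $ i = u $ i + t * e i" for t i
    by (simp add: e_def axis_def)
  have "\<mu>\<^sup>2 - (u $ i)\<^sup>2 > 0" for i
    using assms abs_less_imp_power2_less by simp
  then have "((\<lambda>t. \<Sum>i\<in>UNIV. ln (\<mu>\<^sup>2 - (u $ i + t * e i)\<^sup>2))
      has_real_derivative (\<Sum>i\<in>UNIV. e i * (- 2 * u $ i / (\<mu>\<^sup>2 - (u $ i)\<^sup>2)))) (at 0)"
    by (intro DERIV_sum) (auto intro!: derivative_eq_intros simp: field_simps)
  moreover have "(\<Sum>i\<in>UNIV. e i * (- 2 * u $ i / (\<mu>\<^sup>2 - (u $ i)\<^sup>2)))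
      = - 2 * u $ j / (\<mu>\<^sup>2 - (u $ j)\<^sup>2)"
    unfolding e_def sum_of_bool_mult_eq[OF finite_class.finite_UNIV] by simp
  ultimately show ?thesis
    unfolding comp by simp
qed

lemma barrier_objective_axis_deriv:
  assumes "transpose A = A" and "\<forall>i. \<bar>u $ i\<bar> < \<mu>"
  shows "((\<lambda>t. barrier_objective A w \<mu> \<tau> (u + t *s axis j 1)) has_real_derivative
     - 2 * ((A *v (w - u)) $ j - u $ j / (\<tau> * (\<mu>\<^sup>2 - (u $ j)\<^sup>2)))) (at 0)"
proof -
  have comp: "u + t *s axis j 1 - w = (u - w) + t *s axis j 1" for t
    by (simp add: algebra_simps)
  have "((\<lambda>t. barrier_objective A w \<mu> \<tau> (u + t *s axis j 1)) has_real_derivative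
      2 * (A *v (u - w)) $ j - (1 / \<tau>) * (- 2 * u $ j / (\<mu>\<^sup>2 - (u $ j)\<^sup>2))) (at 0)"
    unfolding barrier_objective_def comp using assms
    by (intro DERIV_diff DERIV_cmult quadratic_form_axis_deriv ln_barrier_axis_deriv)
  moreover have "A *v (u - w) = - (A *v (w - u))"
    by (simp add: matrix_vector_mult_diff_distrib)
  ultimately show ?thesis
    by (simp add: algebra_simps)
qed

lemma barrier_objective_lower_bound:
  fixes v :: "real^'n"
  assumes "pos_def_mat A" and "\<tau> > 0" and "\<forall>i. \<bar>v $ i\<bar> < \<mu>"
  shows "barrier_objective A w \<mu> \<tau> v \<ge> - (ln (\<mu>\<^sup>2 - (v $ k)\<^sup>2) + CARD('n) * \<bar>ln (\<mu>\<^sup>2)\<bar>) / \<tau>"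
proof -
  let ?L = "\<lambda>j. ln (\<mu>\<^sup>2 - (v $ j)\<^sup>2)"
  have quad: "(\<Sum>i\<in>UNIV. \<Sum>k\<in>UNIV. (v - w) $ i * A $ i $ k * (v - w) $ k) \<ge> 0"
    using pos_def_mat_nonneg[OF assms(1), of "v - w"]
    by (simp add: inner_vec_def matrix_vector_mult_def sum_distrib_left mult.assoc)
  have "?L j \<le> \<bar>ln (\<mu>\<^sup>2)\<bar>" for j
  proof -
    have "\<mu>\<^sup>2 - (v $ j)\<^sup>2 > 0"
      using assms(3) abs_less_imp_power2_less by simp
    then have "?L j \<le> ln (\<mu>\<^sup>2)"
      by (intro ln_mono) auto
    then show ?thesis by linarith
  qed
  then have "(\<Sum>j\<in>UNIV - {k}. ?L j) \<le> (\<Sum>j\<in>UNIV - {k}. \<bar>ln (\<mu>\<^sup>2)\<bar>)"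
    by (intro sum_mono)
  also have "\<dots> \<le> (\<Sum>j\<in>(UNIV :: 'n set). \<bar>ln (\<mu>\<^sup>2)\<bar>)"
    by (rule sum_mono2) auto
  finally have "(\<Sum>j\<in>UNIV. ?L j) \<le> ?L k + CARD('n) * \<bar>ln (\<mu>\<^sup>2)\<bar>"
    by (simp add: sum.remove[of UNIV k])
  then have "(1 / \<tau>) * (\<Sum>j\<in>UNIV. ?L j) \<le> (?L k + CARD('n) * \<bar>ln (\<mu>\<^sup>2)\<bar>) / \<tau>"
    using assms(2) by (simp add: divide_right_mono)
  then show ?thesis
    unfolding barrier_objective_def minus_divide_left using quad by linarith
qed

lemma barrier_objective_coercive:
  fixes A :: "real^'n^'n"
  assumes "pos_def_mat A" and "\<mu> > 0" and "\<tau> > 0"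
  obtains r where "0 \<le> r" "r < \<mu>"
    and "\<And>v k. \<forall>i. \<bar>v $ i\<bar> < \<mu> \<Longrightarrow> r < \<bar>v $ k\<bar> \<Longrightarrow>
           barrier_objective A w \<mu> \<tau> 0 < barrier_objective A w \<mu> \<tau> v"
proof
  let ?F0 = "barrier_objective A w \<mu> \<tau> 0"
  let ?K = "CARD('n) * \<bar>ln (\<mu>\<^sup>2)\<bar>"
  define \<delta> where "\<delta> = min (\<mu>\<^sup>2 / 2) (exp (- \<tau> * ?F0 - ?K))"
  have "\<delta> \<le> \<mu>\<^sup>2 / 2"
    by (simp add: \<delta>_def)
  moreover have "0 < \<delta>"
    using assms(2) by (simp add: \<delta>_def)
  ultimately have \<delta>: "0 < \<delta>" "\<delta> < \<mu>\<^sup>2"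
    using assms(2) by simp_all
  define r where "r = sqrt (\<mu>\<^sup>2 - \<delta>)"
  show "0 \<le> r"
    using \<delta> by (simp add: r_def)
  show "r < \<mu>"
    using \<delta> assms(2) by (simp add: r_def real_sqrt_less_iff real_less_lsqrt)
  fix v :: "real^'n" and k
  assume box: "\<forall>i. \<bar>v $ i\<bar> < \<mu>" and "r < \<bar>v $ k\<bar>"
  then have "r\<^sup>2 < (v $ k)\<^sup>2"
    using \<open>0 \<le> r\<close> abs_less_imp_power2_less[of r "\<bar>v $ k\<bar>"] by simp
  then have "\<mu>\<^sup>2 - (v $ k)\<^sup>2 < exp (- \<tau> * ?F0 - ?K)"
    using \<delta> unfolding r_def \<delta>_def by simp
  moreover have "0 < \<mu>\<^sup>2 - (v $ k)\<^sup>2"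
    using box abs_less_imp_power2_less by simp
  ultimately have "ln (\<mu>\<^sup>2 - (v $ k)\<^sup>2) < - \<tau> * ?F0 - ?K"
    by (metis ln_less_cancel_iff exp_gt_zero ln_exp)
  then have "?F0 < - (ln (\<mu>\<^sup>2 - (v $ k)\<^sup>2) + ?K) / \<tau>"
    using assms(3) by (simp add: field_simps)
  also have "\<dots> \<le> barrier_objective A w \<mu> \<tau> v"
    by (rule barrier_objective_lower_bound[OF assms(1,3) box])
  finally show "?F0 < barrier_objective A w \<mu> \<tau> v" .
qed

lemma barrier_objective_has_min:
  fixes A :: "real^'n^'n"
  assumes "pos_def_mat A" and "\<mu> > 0" and "\<tau> > 0"
  obtains u where "\<forall>i. \<bar>u $ i\<bar> < \<mu>"
    and "\<And>v. \<forall>i. \<bar>v $ i\<bar> < \<mu> \<Longrightarrow> barrier_objective A w \<mu> \<tau> u \<le> barrier_objective A w \<mu> \<tau> v"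
proof -
  let ?F = "barrier_objective A w \<mu> \<tau>"
  obtain r where r: "0 \<le> r" "r < \<mu>"
    and coercive: "\<And>v k. \<forall>i. \<bar>v $ i\<bar> < \<mu> \<Longrightarrow> r < \<bar>v $ k\<bar> \<Longrightarrow> ?F 0 < ?F v"
    using barrier_objective_coercive[OF assms] by blast
  define B :: "(real^'n) set" where "B = cbox (\<chi> i. - r) (\<chi> i. r)"
  have B: "v \<in> B \<longleftrightarrow> (\<forall>i. \<bar>v $ i\<bar> \<le> r)" for v
    unfolding B_def mem_box_cart by (auto simp: abs_le_iff) (metis minus_le_iff)+
  have sq: "(v $ j)\<^sup>2 < \<mu>\<^sup>2" if "v \<in> B" for v j
    using that B r(2) abs_less_imp_power2_less le_less_trans by blast
  have "continuous_on B ?F"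
    unfolding barrier_objective_def by (intro continuous_intros) (auto dest: sq)
  moreover have "0 \<in> B"
    using B r by simp
  ultimately obtain u where "u \<in> B" and min: "\<And>v. v \<in> B \<Longrightarrow> ?F u \<le> ?F v"
    using continuous_attains_inf[of B ?F] unfolding B_def by (metis compact_cbox empty_iff)
  show thesis
  proof (rule that[of u])
    show "\<forall>i. \<bar>u $ i\<bar> < \<mu>"
      using \<open>u \<in> B\<close> B r(2) le_less_trans by blast
    fix v :: "real^'n"
    assume "\<forall>i. \<bar>v $ i\<bar> < \<mu>"
    then show "?F u \<le> ?F v"
      using min[of v] min[OF \<open>0 \<in> B\<close>] coercive[of v] B by (meson less_le_trans not_le order.strict_implies_order)
  qed
qed

lemma critical_eq_exists:
  assumes "pos_def_mat A" and "\<mu> > 0" and "\<tau> > 0"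
  shows "\<exists>u. (\<forall>i. \<bar>u $ i\<bar> < \<mu>) \<and> critical_eq A w \<mu> \<tau> u"
proof -
  obtain u where box: "\<forall>i. \<bar>u $ i\<bar> < \<mu>"
    and min: "\<And>v. \<forall>i. \<bar>v $ i\<bar> < \<mu> \<Longrightarrow> barrier_objective A w \<mu> \<tau> u \<le> barrier_objective A w \<mu> \<tau> v"
    using barrier_objective_has_min[OF assms] by blast
  have "(A *v (w - u)) $ j = u $ j / (\<tau> * (\<mu>\<^sup>2 - (u $ j)\<^sup>2))" for j
  proof -
    have "transpose A = A"
      using assms(1) unfolding pos_def_mat_def by blast
    note deriv = barrier_objective_axis_deriv[OF this box, of w \<tau> j]
    have "barrier_objective A w \<mu> \<tau> (u + 0 *s axis j 1) \<le> barrier_objective A w \<mu> \<tau> (u + t *s axis j 1)"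
      if "\<bar>0 - t\<bar> < \<mu> - \<bar>u $ j\<bar>" for t
    proof -
      have "\<bar>(u + t *s axis j 1) $ i\<bar> < \<mu>" for i
        using box that by (cases "i = j") (auto simp: axis_def)
      then show ?thesis
        using min by simp
    qed
    then have "- 2 * ((A *v (w - u)) $ j - u $ j / (\<tau> * (\<mu>\<^sup>2 - (u $ j)\<^sup>2))) = 0"
      using DERIV_local_min[OF deriv] box by (metis diff_gt_0_iff_gt)
    then show ?thesis
      by simp
  qed
  then show ?thesis
    using box unfolding critical_eq_real_iff by blast
qed

lemma critical_eq_real_cubic:
  fixes u :: "real^'n"
  assumes "\<bar>u $ j\<bar> < \<mu>" and "critical_eq A w \<mu> \<tau> u"
  shows "(\<mu>\<^sup>2 - (u $ j)\<^sup>2) * (A *v (w - u)) $ j - u $ j / \<tau> = 0"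
proof -
  have "\<mu>\<^sup>2 - (u $ j)\<^sup>2 \<noteq> 0"
    using abs_less_imp_power2_less[OF assms(1)] by simp
  then show ?thesis
    using assms(2) unfolding critical_eq_real_iff by (cases "\<tau> = 0") (simp_all add: field_simps)
qed

lemma saddle_point_H_tau_real:
  fixes C :: "real^'n^'n"
  assumes "pos_def_mat C" and "\<tau> > 0" and "z \<in> strip_dom \<mu>" and "saddle_point (H_tau C w \<mu> \<tau>) z"
  shows "z = of_real_vec (\<chi> i. Re (z $ i))"
proof -
  have "critical_eq (matrix_inv C) w \<mu> \<tau> z"
    using assms(3,4) saddle_point_H_tau_iff[OF assms(1)] by blast
  then show ?thesis
    using critical_eq_Im_eq_0[OF pos_def_mat_matrix_inv[OF assms(1)] assms(2)]
    by (simp add: vec_eq_iff complex_eq_iff)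
qed

lemma saddle_point_H_tau_unique:
  fixes C :: "real^'n^'n"
  assumes "pos_def_mat C" and "\<tau> > 0"
    and "z \<in> strip_dom \<mu>" and "saddle_point (H_tau C w \<mu> \<tau>) z"
    and "z' \<in> strip_dom \<mu>" and "saddle_point (H_tau C w \<mu> \<tau>) z'"
  shows "z = z'"
proof -
  have real: "(\<forall>i. \<bar>Re (x $ i)\<bar> < \<mu>) \<and> critical_eq (matrix_inv C) w \<mu> \<tau> (\<chi> i. Re (x $ i))"
    if "x \<in> strip_dom \<mu>" and "saddle_point (H_tau C w \<mu> \<tau>) x" for x
  proof
    show "\<forall>i. \<bar>Re (x $ i)\<bar> < \<mu>"
      using that(1) by (simp add: strip_dom_def)
    define v where "v = (\<chi> i. Re (x $ i))"
    have x: "x = of_real_vec v"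
      unfolding v_def by (rule saddle_point_H_tau_real[OF assms(1,2) that])
    have "critical_eq (matrix_inv C) w \<mu> \<tau> x"
      using that saddle_point_H_tau_iff[OF assms(1)] by blast
    then show "critical_eq (matrix_inv C) w \<mu> \<tau> v"
      unfolding x critical_eq_of_real_vec_iff .
  qed
  have "(\<chi> i. Re (z $ i)) = (\<chi> i. Re (z' $ i))"
    using real[OF assms(3,4)] real[OF assms(5,6)]
    by (intro critical_eq_real_unique[OF pos_def_mat_matrix_inv[OF assms(1)] assms(2)]) auto
  then show ?thesis
    using saddle_point_H_tau_real[OF assms(1,2,3,4)] saddle_point_H_tau_real[OF assms(1,2,5,6)] by simp
qed

theorem theorem1:
  fixes C :: "real^'n^'n" and w :: "real^'n" and \<mu> \<tau> :: real
  assumes "pos_def_mat C" and "\<mu> > 0" and "\<tau> > 0"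
  shows "\<exists>z. z \<in> strip_dom \<mu> \<and> saddle_point (H_tau C w \<mu> \<tau>) z
           \<and> (\<forall>z'. z' \<in> strip_dom \<mu> \<and> saddle_point (H_tau C w \<mu> \<tau>) z' \<longrightarrow> z' = z)
           \<and> (\<forall>j. Im (z $ j) = 0)
           \<and> (\<forall>j. (\<mu>\<^sup>2 - (Re (z $ j))\<^sup>2) * ((matrix_inv C *v (w - (\<chi> i. Re (z $ i)))) $ j)
                    - Re (z $ j) / \<tau> = 0)"
proof -
  obtain u where box: "\<forall>i. \<bar>u $ i\<bar> < \<mu>" and crit: "critical_eq (matrix_inv C) w \<mu> \<tau> u"
    using critical_eq_exists[OF pos_def_mat_matrix_inv[OF assms(1)] assms(2,3)] by blast
  have strip: "of_real_vec u \<in> strip_dom \<mu>"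
    using box by (simp add: strip_dom_def)
  have Re_u: "(\<chi> i. Re (of_real_vec u $ i :: complex)) = u"
    by (simp add: vec_eq_iff)
  show ?thesis
  proof (intro exI[of _ "of_real_vec u"] conjI allI impI)
    show saddle: "saddle_point (H_tau C w \<mu> \<tau>) (of_real_vec u)"
      using saddle_point_H_tau_iff[OF assms(1) strip] crit critical_eq_of_real_vec_iff by blast
    show "z = of_real_vec u" if "z \<in> strip_dom \<mu> \<and> saddle_point (H_tau C w \<mu> \<tau>) z" for z
      using saddle_point_H_tau_unique[OF assms(1,3) _ _ strip saddle] that by blast
    fix j
    show "(\<mu>\<^sup>2 - (Re (of_real_vec u $ j))\<^sup>2) * (matrix_inv C *v (w - (\<chi> i. Re (of_real_vec u $ i)))) $ j
        - Re (of_real_vec u $ j) / \<tau> = 0"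
      using critical_eq_real_cubic[OF box[rule_format] crit] unfolding Re_u by simp
  qed (use strip in simp_all)
qed

end
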